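(* Let $m \geq 2$ be an integer and $n = m^2$. For $k = 0,1,\ldots,m-1$ let $u_k = e^{i 2 k \pi/m}$. For $\mathbf{t} = (t_0,t_1,\ldots,t_{m-2}) \in (\mathbb{C}\setminus\{0\})^{m-1}$ define the point $\mathbf{x}(\mathbf{t}) = (x_0,\ldots,x_{n-1}) \in \mathbb{C}^n$ by \[ x_{km+j} = u_k\, t_0 t_1 \cdots t_j \quad (j = 0,1,\ldots,m-2), \qquad x_{km+m-1} = u_k\, t_0^{-m+1} t_1^{-m+2} \cdots t_{m-3}^{-2} t_{m-2}^{-1}, \] for $k = 0,1,\ldots,m-1$ (so the exponent of $t_j$ in $x_{km+m-1}$ is $-(m-1-j)$). Let $S \subseteq \mathbb{C}^n$ be the Zariski closure of $\{\mathbf{x}(\mathbf{t}) : \mathbf{t} \in (\mathbb{C}\setminus\{0\})^{m-1}\}$, an $(m-1)$-dimensional algebraic set. Then the degree of $S$ equals $m$.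
   Context: The degree of an algebraic set $S \subseteq \mathbb{C}^n$ of dimension $d$ is the number of points in the intersection of $S$ with $d$ hyperplanes with generic (random) complex coefficients. *)

theory Defs
  imports Complex_Main
begin

text \<open>Points of C^n are represented as functions nat => complex that vanish
  outside the index range {0..<n}.\<close>

definition cpoints :: "nat \<Rightarrow> (nat \<Rightarrow> complex) set" where
  "cpoints n = {x. \<forall>i\<ge>n. x i = 0}"

inductive poly_fun :: "nat \<Rightarrow> ((nat \<Rightarrow> complex) \<Rightarrow> complex) \<Rightarrow> bool" for n where
  pf_const: "poly_fun n (\<lambda>x. c)"
| pf_var: "i < n \<Longrightarrow> poly_fun n (\<lambda>x. x i)"
| pf_add: "poly_fun n p \<Longrightarrow> poly_fun n q \<Longrightarrow> poly_fun n (\<lambda>x. p x + q x)"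
| pf_mult: "poly_fun n p \<Longrightarrow> poly_fun n q \<Longrightarrow> poly_fun n (\<lambda>x. p x * q x)"

definition zariski_closure :: "nat \<Rightarrow> (nat \<Rightarrow> complex) set \<Rightarrow> (nat \<Rightarrow> complex) set" where
  "zariski_closure n A =
     {x \<in> cpoints n. \<forall>p. poly_fun n p \<and> (\<forall>y\<in>A. p y = 0) \<longrightarrow> p x = 0}"

text \<open>Intersection of S with d affine hyperplanes of C^n. The coefficients are
  packed in a point a of C^(d*(n+1)): hyperplane l (l < d) is
  a(l*(n+1)+n) + sum_{i<n} a(l*(n+1)+i) * x i = 0.\<close>

definition hyperplane_section ::
  "nat \<Rightarrow> nat \<Rightarrow> (nat \<Rightarrow> complex) set \<Rightarrow> (nat \<Rightarrow> complex) \<Rightarrow> (nat \<Rightarrow> complex) set" where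
  "hyperplane_section n d S a =
     {x \<in> S. \<forall>l<d. a (l*(n+1)+n) + (\<Sum>i<n. a (l*(n+1)+i) * x i) = 0}"

text \<open>S (of dimension d) has degree D: for generic coefficients, i.e. for all
  coefficient vectors outside a proper Zariski-closed subset of C^(d*(n+1))
  (the zero set of a polynomial that is not identically zero), the intersection
  of S with the d hyperplanes consists of exactly D points.\<close>

definition has_degree :: "nat \<Rightarrow> nat \<Rightarrow> (nat \<Rightarrow> complex) set \<Rightarrow> nat \<Rightarrow> bool" where
  "has_degree n d S D \<longleftrightarrow>
     (\<exists>P. poly_fun (d*(n+1)) P \<and> (\<exists>a\<in>cpoints (d*(n+1)). P a \<noteq> 0) \<and>
        (\<forall>a\<in>cpoints (d*(n+1)). P a \<noteq> 0 \<longrightarrow>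
            finite (hyperplane_section n d S a) \<and> card (hyperplane_section n d S a) = D))"

definition root_u :: "nat \<Rightarrow> nat \<Rightarrow> complex" where
  "root_u m k = exp (2 * pi * \<i> * of_nat k / of_nat m)"

definition param_point :: "nat \<Rightarrow> (nat \<Rightarrow> complex) \<Rightarrow> (nat \<Rightarrow> complex)" where
  "param_point m t = (\<lambda>p. if p < m * m then
      (let k = p div m; j = p mod m in
        if j \<le> m - 2 then root_u m k * (\<Prod>i\<le>j. t i)
        else root_u m k * (\<Prod>i<m-1. inverse (t i) ^ (m - 1 - i)))
     else 0)"

end

theory Submission
  imports Defs
    "Subresultants.Subresultant_Gcd"
    "HOL-Computational_Algebra.Field_as_Ring"
    "HOL-Computational_Algebra.Fundamental_Theorem_Algebra"
begin

(* The image of the parametrisation is cut out by the equations x_{km+j} = u_k x_j and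
   x_0 x_1 ... x_{m-1} = 1, so S is this set and every point of S is determined by
   y = (x_0, ..., x_{m-1}). On S a hyperplane becomes a linear equation in y. When the minor
   D of the last m-1 columns of the resulting (m-1) x m system is nonzero, Cramer's rule gives
   y_{j+1} = (alpha_j + s beta_j) / D with s = y_0, and the remaining equation prod y_j = 1
   becomes s prod_j (alpha_j + s beta_j) = D^(m-1). Its degree is m if all beta_j are nonzero,
   and its roots are simple if its discriminant is nonzero. Since D, alpha_j and beta_j are
   polynomial in the hyperplane coefficients (via the adjugate), the section has exactly m
   points off the zero set of D * prod beta_j * discriminant; the hyperplanes x_{l+1} = x_0,
   which lead to s^m = 1, show that this polynomial does not vanish identically. *)

lemma poly_fun_uminus: "poly_fun N p \<Longrightarrow> poly_fun N (\<lambda>x. - p x)"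
  using pf_mult[OF pf_const[of N "-1"], of p] by simp

lemma poly_fun_diff: "poly_fun N p \<Longrightarrow> poly_fun N q \<Longrightarrow> poly_fun N (\<lambda>x. p x - q x)"
  using pf_add[OF _ poly_fun_uminus[of N q]] by simp

lemma poly_fun_sum:
  "finite S \<Longrightarrow> (\<And>s. s \<in> S \<Longrightarrow> poly_fun N (f s)) \<Longrightarrow> poly_fun N (\<lambda>x. \<Sum>s\<in>S. f s x)"
  by (induction S rule: finite_induct) (auto intro: pf_add pf_const[of N 0, simplified])

lemma poly_fun_prod:
  "finite S \<Longrightarrow> (\<And>s. s \<in> S \<Longrightarrow> poly_fun N (f s)) \<Longrightarrow> poly_fun N (\<lambda>x. \<Prod>s\<in>S. f s x)"
  by (induction S rule: finite_induct) (auto intro: pf_mult pf_const[of N 1, simplified])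

lemma poly_fun_power: "poly_fun N p \<Longrightarrow> poly_fun N (\<lambda>x. p x ^ k)"
  by (induction k) (auto intro: pf_mult pf_const[of N 1, simplified])

lemma poly_fun_if: "poly_fun N f \<Longrightarrow> poly_fun N g \<Longrightarrow> poly_fun N (\<lambda>x. if P then f x else g x)"
  by (cases P) simp_all

lemma poly_fun_det:
  assumes "\<And>a. A a \<in> carrier_mat r r"
    and "\<And>i j. i < r \<Longrightarrow> j < r \<Longrightarrow> poly_fun N (\<lambda>a. A a $$ (i,j))"
  shows "poly_fun N (\<lambda>a. det (A a))"
proof -
  have "poly_fun N (\<lambda>a. \<Sum>p \<in> {p. p permutes {0..<r}}. signof p * (\<Prod>i = 0..<r. A a $$ (i, p i)))"
    using assms(2) by (intro poly_fun_sum pf_mult pf_const poly_fun_prod)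
      (auto simp: finite_permutations permutes_in_image)
  then show ?thesis
    using det_def'[OF assms(1)] by simp
qed

lemma poly_fun_adj_mat:
  assumes carrier: "\<And>a. A a \<in> carrier_mat r r"
    and entries: "\<And>i j. i < r \<Longrightarrow> j < r \<Longrightarrow> poly_fun N (\<lambda>a. A a $$ (i,j))"
    and "i < r" "j < r"
  shows "poly_fun N (\<lambda>a. adj_mat (A a) $$ (i,j))"
proof -
  have dims: "dim_row (A a) = r" "dim_col (A a) = r" for a
    using carrier[of a] by auto
  have "poly_fun N (\<lambda>a. (-1)^(j+i) * det (mat_delete (A a) j i))"
  proof (intro pf_mult pf_const poly_fun_det)
    show "mat_delete (A a) j i \<in> carrier_mat (r-1) (r-1)" for a
      by (simp add: carrier_matI dims)
    fix i' j' assume "i' < r - 1" "j' < r - 1"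
    then show "poly_fun N (\<lambda>a. mat_delete (A a) j i $$ (i', j'))"
      unfolding mat_delete_def using dims by (auto intro!: entries)
  qed
  then show ?thesis
    using assms(3,4) by (simp add: adj_mat_def dims cofactor_def)
qed

definition poly_fun_coeffs :: "nat \<Rightarrow> ((nat \<Rightarrow> complex) \<Rightarrow> complex poly) \<Rightarrow> bool" where
  "poly_fun_coeffs N F \<longleftrightarrow> (\<forall>i. poly_fun N (\<lambda>a. coeff (F a) i))"

lemma poly_fun_coeffs_const: "poly_fun N c \<Longrightarrow> poly_fun_coeffs N (\<lambda>a. [:c a:])"
proof (unfold poly_fun_coeffs_def, intro allI)
  fix i assume "poly_fun N c"
  then show "poly_fun N (\<lambda>a. coeff [:c a:] i)"
    by (cases i) (simp_all add: pf_const)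
qed

lemma poly_fun_coeffs_linear:
  "poly_fun N c \<Longrightarrow> poly_fun N d \<Longrightarrow> poly_fun_coeffs N (\<lambda>a. [:c a, d a:])"
proof (unfold poly_fun_coeffs_def, intro allI)
  fix i assume "poly_fun N c" "poly_fun N d"
  then show "poly_fun N (\<lambda>a. coeff [:c a, d a:] i)"
    by (cases i; cases "i - 1") (simp_all add: pf_const)
qed

lemma poly_fun_coeffs_diff:
  "poly_fun_coeffs N F \<Longrightarrow> poly_fun_coeffs N G \<Longrightarrow> poly_fun_coeffs N (\<lambda>a. F a - G a)"
  unfolding poly_fun_coeffs_def coeff_diff by (simp add: poly_fun_diff)

lemma poly_fun_coeffs_mult:
  "poly_fun_coeffs N F \<Longrightarrow> poly_fun_coeffs N G \<Longrightarrow> poly_fun_coeffs N (\<lambda>a. F a * G a)"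
  unfolding poly_fun_coeffs_def coeff_mult by (simp add: poly_fun_sum pf_mult)

lemma poly_fun_coeffs_prod:
  "finite S \<Longrightarrow> (\<And>s. s \<in> S \<Longrightarrow> poly_fun_coeffs N (F s)) \<Longrightarrow>
    poly_fun_coeffs N (\<lambda>a. \<Prod>s\<in>S. F s a)"
proof (induction S rule: finite_induct)
  case empty
  then show ?case
    using poly_fun_coeffs_const[OF pf_const[of N 1]] by (simp add: pCons_one)
next
  case (insert s S)
  then show ?case by (simp add: poly_fun_coeffs_mult)
qed

lemma poly_fun_coeffs_pderiv: "poly_fun_coeffs N F \<Longrightarrow> poly_fun_coeffs N (\<lambda>a. pderiv (F a))"
  unfolding poly_fun_coeffs_def coeff_pderiv by (simp add: pf_mult pf_const)

lemma poly_fun_det_sylvester_mat_sub: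
  assumes "poly_fun_coeffs N F" "poly_fun_coeffs N G"
  shows "poly_fun N (\<lambda>a. det (sylvester_mat_sub p q (F a) (G a)))"
proof (rule poly_fun_det)
  show "sylvester_mat_sub p q (F a) (G a) \<in> carrier_mat (p + q) (p + q)" for a
    by (rule sylvester_mat_sub_carrier)
  fix i j assume "i < p + q" "j < p + q"
  then show "poly_fun N (\<lambda>a. sylvester_mat_sub p q (F a) (G a) $$ (i, j))"
    using assms pf_const[of N 0] unfolding poly_fun_coeffs_def
    by (cases "i < q") (simp_all add: sylvester_mat_sub_index poly_fun_if)
qed

section \<open>The image of the parametrisation\<close>

lemma block_index_less:
  fixes k j K n :: nat
  assumes "k < K" "j < n"
  shows "k*n + j < K*n"
proof -
  have "k*n + j < Suc k * n" using assms(2) by simp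
  also have "\<dots> \<le> K*n" using assms(1) by (intro mult_right_mono) auto
  finally show ?thesis .
qed

lemma sum_lessThan_mult_blocks:
  fixes f :: "nat \<Rightarrow> 'a::comm_monoid_add"
  shows "(\<Sum>i<K*n. f i) = (\<Sum>k<K. \<Sum>j<n. f (k*n + j))"
proof -
  have "sum f {k*n..<k*n + n} = (\<Sum>j<n. f (k*n + j))" for k
    using sum.shift_bounds_nat_ivl[of f 0 "k*n" n] by (simp add: atLeast0LessThan add.commute)
  then show ?thesis by (simp add: sum.nat_group[symmetric])
qed

lemma prod_lessThan_prod_atMost:
  "(\<Prod>j<n. \<Prod>i\<le>j. f i) = (\<Prod>i<n. (f i :: 'a::comm_monoid_mult) ^ (n - i))"
proof (induction n)
  case (Suc n)
  have "(\<Prod>i\<le>n. f i) = (\<Prod>i<n. f i) * f n"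
    by (simp add: lessThan_Suc_atMost[symmetric])
  then have "(\<Prod>j<Suc n. \<Prod>i\<le>j. f i) = (\<Prod>i<n. f i ^ (n - i) * f i) * f n"
    by (simp only: prod.lessThan_Suc Suc.IH prod.distrib ac_simps)
  also have "(\<Prod>i<n. f i ^ (n - i) * f i) = (\<Prod>i<n. f i ^ (Suc n - i))"
    by (intro prod.cong refl) (simp add: Suc_diff_le less_imp_le power_Suc2[symmetric])
  finally show ?case by simp
qed simp

lemma prod_atMost_ratios:
  fixes y :: "nat \<Rightarrow> 'a::field"
  assumes "\<And>i. i < j \<Longrightarrow> y i \<noteq> 0"
  shows "(\<Prod>i\<le>j. y i / (if i = 0 then 1 else y (i - 1))) = y j"
  using assms by (induction j) simp_all

definition cyclic_extension :: "nat \<Rightarrow> (nat \<Rightarrow> complex) \<Rightarrow> nat \<Rightarrow> complex" where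
  "cyclic_extension m y = (\<lambda>p. if p < m*m then root_u m (p div m) * y (p mod m) else 0)"

definition param_locus :: "nat \<Rightarrow> (nat \<Rightarrow> complex) set" where
  "param_locus m = {x \<in> cpoints (m*m).
     (\<forall>k<m. \<forall>j<m. x (k*m + j) = root_u m k * x j) \<and> (\<Prod>j<m. x j) = 1}"

lemma root_u_0 [simp]: "root_u m 0 = 1"
  by (simp add: root_u_def)

lemma div_mod_less_of_less_square: "p < m*m \<Longrightarrow> p div m < m \<and> p mod m < (m::nat)"
  by (cases "m = 0") (auto simp: less_mult_imp_div_less)

lemma cyclic_extension_block:
  "k < m \<Longrightarrow> j < m \<Longrightarrow> cyclic_extension m y (k*m + j) = root_u m k * y j"
  unfolding cyclic_extension_def using block_index_less[of k m j m] by simp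

lemma cyclic_extension_nth: "j < m \<Longrightarrow> cyclic_extension m y j = y j"
  using cyclic_extension_block[of 0 m j y] by simp

lemma cyclic_extension_cong:
  "(\<And>j. j < m \<Longrightarrow> y j = z j) \<Longrightarrow> cyclic_extension m y = cyclic_extension m z"
  unfolding cyclic_extension_def by (auto simp: div_mod_less_of_less_square)

lemma param_locus_eq: "param_locus m = cyclic_extension m ` {y. (\<Prod>j<m. y j) = 1}"
proof (intro equalityI subsetI)
  fix x assume x: "x \<in> param_locus m"
  have "x p = cyclic_extension m x p" for p
  proof (cases "p < m*m")
    case True
    then have "x (p div m * m + p mod m) = root_u m (p div m) * x (p mod m)"
      using x div_mod_less_of_less_square[OF True] unfolding param_locus_def by blast
    then show ?thesis
      using True by (simp add: cyclic_extension_def)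
  next
    case False
    then show ?thesis
      using x by (simp add: param_locus_def cpoints_def cyclic_extension_def)
  qed
  then have "x = cyclic_extension m x"
    by (simp add: fun_eq_iff)
  moreover have "(\<Prod>j<m. x j) = 1"
    using x by (simp add: param_locus_def)
  ultimately show "x \<in> cyclic_extension m ` {y. (\<Prod>j<m. y j) = 1}"
    by blast
next
  fix x assume "x \<in> cyclic_extension m ` {y. (\<Prod>j<m. y j) = 1}"
  then obtain y where x: "x = cyclic_extension m y" and y: "(\<Prod>j<m. y j) = 1" by blast
  have "cyclic_extension m y \<in> cpoints (m*m)"
    by (simp add: cpoints_def cyclic_extension_def)
  moreover have "\<forall>k<m. \<forall>j<m. cyclic_extension m y (k*m + j) = root_u m k * cyclic_extension m y j"
    by (simp add: cyclic_extension_block cyclic_extension_nth)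
  moreover have "(\<Prod>j<m. cyclic_extension m y j) = (\<Prod>j<m. y j)"
    by (rule prod.cong) (simp_all add: cyclic_extension_nth)
  ultimately show "x \<in> param_locus m"
    unfolding param_locus_def x using y by simp
qed

definition param_coords :: "nat \<Rightarrow> (nat \<Rightarrow> complex) \<Rightarrow> nat \<Rightarrow> complex" where
  "param_coords m t j = (if j \<le> m - 2 then \<Prod>i\<le>j. t i else \<Prod>i<m-1. inverse (t i) ^ (m - 1 - i))"

lemma param_point_eq_cyclic_extension: "param_point m t = cyclic_extension m (param_coords m t)"
  unfolding param_point_def cyclic_extension_def param_coords_def Let_def by (auto intro!: ext)

lemma prod_param_coords:
  assumes m: "m \<ge> 2" and t: "\<forall>j<m-1. t j \<noteq> 0"
  shows "(\<Prod>j<m. param_coords m t j) = 1"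
proof -
  have "(\<Prod>j<m. param_coords m t j) = (\<Prod>j<m-1. param_coords m t j) * param_coords m t (m - 1)"
    using m prod.lessThan_Suc[of "param_coords m t" "m-1"] by simp
  also have "(\<Prod>j<m-1. param_coords m t j) = (\<Prod>j<m-1. \<Prod>i\<le>j. t i)"
    by (intro prod.cong) (auto simp: param_coords_def)
  also have "param_coords m t (m - 1) = (\<Prod>i<m-1. inverse (t i) ^ (m - 1 - i))"
    using m by (simp add: param_coords_def)
  also have "(\<Prod>j<m-1. \<Prod>i\<le>j. t i) * (\<Prod>i<m-1. inverse (t i) ^ (m - 1 - i))
      = (\<Prod>i<m-1. (t i * inverse (t i)) ^ (m - 1 - i))"
    by (simp add: prod_lessThan_prod_atMost prod.distrib power_mult_distrib)
  also have "\<dots> = 1"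
    using t by simp
  finally show ?thesis .
qed

lemma exists_param_coords:
  assumes m: "m \<ge> 2" and y: "(\<Prod>j<m. y j) = 1"
  obtains t where "\<forall>j<m-1. t j \<noteq> 0" "\<And>j. j < m \<Longrightarrow> param_coords m t j = y j"
proof
  have nonzero: "y j \<noteq> 0" if "j < m" for j
    using y that by (metis finite_lessThan lessThan_iff prod_zero zero_neq_one)
  define t where "t i = y i / (if i = 0 then 1 else y (i - 1))" for i
  show "\<forall>j<m-1. t j \<noteq> 0"
    using nonzero by (auto simp: t_def)
  have prod_t: "(\<Prod>i\<le>j. t i) = y j" if "j < m" for j
    unfolding t_def using that nonzero by (intro prod_atMost_ratios) simp
  have "(\<Prod>i<m-1. inverse (t i) ^ (m - 1 - i)) = inverse (\<Prod>i<m-1. t i ^ (m - 1 - i))"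
    using prod_inversef[of "\<lambda>i. t i ^ (m - 1 - i)" "{..<m-1}"] by (simp add: o_def power_inverse)
  also have "(\<Prod>i<m-1. t i ^ (m - 1 - i)) = (\<Prod>j<m-1. \<Prod>i\<le>j. t i)"
    by (rule prod_lessThan_prod_atMost[symmetric])
  also have "\<dots> = (\<Prod>j<m-1. y j)"
    using prod_t by (intro prod.cong) auto
  also have "inverse (\<Prod>j<m-1. y j) = y (m - 1)"
    using y m prod.lessThan_Suc[of y "m-1"] by (intro inverse_unique) simp
  finally have last: "(\<Prod>i<m-1. inverse (t i) ^ (m - 1 - i)) = y (m - 1)" .
  fix j assume "j < m"
  then consider "j \<le> m - 2" | "j = m - 1" by linarith
  then show "param_coords m t j = y j"
    using prod_t \<open>j < m\<close> last m by cases (auto simp: param_coords_def)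
qed

lemma image_param_point:
  assumes m: "m \<ge> 2"
  shows "{param_point m t | t. \<forall>j<m-1. t j \<noteq> 0} = param_locus m"
proof (unfold param_locus_eq param_point_eq_cyclic_extension, intro equalityI subsetI)
  fix x assume "x \<in> {cyclic_extension m (param_coords m t) | t. \<forall>j<m-1. t j \<noteq> 0}"
  then show "x \<in> cyclic_extension m ` {y. (\<Prod>j<m. y j) = 1}"
    using prod_param_coords[OF m] by blast
next
  fix x assume "x \<in> cyclic_extension m ` {y. (\<Prod>j<m. y j) = 1}"
  then obtain y where x: "x = cyclic_extension m y" and y: "(\<Prod>j<m. y j) = 1" by blast
  obtain t where t: "\<forall>j<m-1. t j \<noteq> 0" and coords: "\<And>j. j < m \<Longrightarrow> param_coords m t j = y j"
    using exists_param_coords[OF m y] by blast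
  have "x = cyclic_extension m (param_coords m t)"
    unfolding x using coords by (intro cyclic_extension_cong) simp
  then show "x \<in> {cyclic_extension m (param_coords m t) | t. \<forall>j<m-1. t j \<noteq> 0}"
    using t by blast
qed

lemma subset_zariski_closure: "A \<subseteq> cpoints n \<Longrightarrow> A \<subseteq> zariski_closure n A"
  unfolding zariski_closure_def by blast

lemma zariski_closure_vanishing:
  "x \<in> zariski_closure n A \<Longrightarrow> poly_fun n p \<Longrightarrow> (\<And>y. y \<in> A \<Longrightarrow> p y = 0) \<Longrightarrow> p x = 0"
  unfolding zariski_closure_def by blast

lemma zariski_closure_param_locus: "zariski_closure (m*m) (param_locus m) = param_locus m"
proof (intro equalityI subsetI)
  fix x assume x: "x \<in> zariski_closure (m*m) (param_locus m)"
  have "x (k*m + j) - root_u m k * x j = 0" if "k < m" "j < m" for k j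
    using that block_index_less[OF that] block_index_less[of 0 m j m]
    by (intro zariski_closure_vanishing[OF x, of "\<lambda>x. x (k*m + j) - root_u m k * x j"]
        poly_fun_diff pf_mult pf_const pf_var) (auto simp: param_locus_def)
  moreover have "(\<Prod>j<m. x j) - 1 = 0"
    using block_index_less[of 0 m _ m]
    by (intro zariski_closure_vanishing[OF x, of "\<lambda>x. (\<Prod>j<m. x j) - 1"]
        poly_fun_diff poly_fun_prod pf_const pf_var) (auto simp: param_locus_def)
  moreover have "x \<in> cpoints (m*m)"
    using x by (simp add: zariski_closure_def)
  ultimately show "x \<in> param_locus m"
    by (simp add: param_locus_def)
qed (rule subset_zariski_closure[THEN subsetD], auto simp: param_locus_def)

section \<open>Linear sections of the image\<close>

lemma smult_one_mat_mult_mat_vec: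
  fixes c :: "'a::semiring_1"
  assumes "v \<in> carrier_vec n"
  shows "(c \<cdot>\<^sub>m 1\<^sub>m n) *\<^sub>v v = c \<cdot>\<^sub>v v"
proof (rule eq_vecI)
  fix i assume "i < dim_vec (c \<cdot>\<^sub>v v)"
  then have i: "i < n" using assms by simp
  have "((c \<cdot>\<^sub>m 1\<^sub>m n) *\<^sub>v v) $ i = (\<Sum>j = 0..<n. c * (if j = i then 1 else 0) * v $ j)"
    using i assms by (simp add: scalar_prod_def)
  also have "\<dots> = (\<Sum>j = 0..<n. if i = j then c * v $ j else 0)"
    by (rule sum.cong) auto
  also have "\<dots> = (c \<cdot>\<^sub>v v) $ i"
    using i assms by simp
  finally show "((c \<cdot>\<^sub>m 1\<^sub>m n) *\<^sub>v v) $ i = (c \<cdot>\<^sub>v v) $ i" .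
qed (use assms in simp)

lemma mult_mat_vec_eq_iff_adj_mat:
  fixes M :: "'a::field mat"
  assumes M: "M \<in> carrier_mat n n" and w: "w \<in> carrier_vec n" and v: "v \<in> carrier_vec n"
    and D: "det M \<noteq> 0"
  shows "M *\<^sub>v w = v \<longleftrightarrow> det M \<cdot>\<^sub>v w = adj_mat M *\<^sub>v v"
proof
  assume "M *\<^sub>v w = v"
  then have "adj_mat M *\<^sub>v v = (adj_mat M * M) *\<^sub>v w"
    using M w adj_mat(1)[OF M] by simp
  also have "\<dots> = det M \<cdot>\<^sub>v w"
    using adj_mat(3)[OF M] smult_one_mat_mult_mat_vec[OF w] by simp
  finally show "det M \<cdot>\<^sub>v w = adj_mat M *\<^sub>v v" by simp
next
  assume "det M \<cdot>\<^sub>v w = adj_mat M *\<^sub>v v"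
  then have "det M \<cdot>\<^sub>v (M *\<^sub>v w) = (M * adj_mat M) *\<^sub>v v"
    using M w v adj_mat(1)[OF M] by (simp add: mult_mat_vec[symmetric])
  also have "\<dots> = det M \<cdot>\<^sub>v v"
    using adj_mat(2)[OF M] smult_one_mat_mult_mat_vec[OF v] by simp
  finally have "inverse (det M) \<cdot>\<^sub>v (det M \<cdot>\<^sub>v (M *\<^sub>v w)) = inverse (det M) \<cdot>\<^sub>v (det M \<cdot>\<^sub>v v)"
    by simp
  then show "M *\<^sub>v w = v"
    using D by (simp add: smult_smult_assoc)
qed

lemma adj_mat_one_mat: "adj_mat (1\<^sub>m n :: 'a::comm_ring_1 mat) = 1\<^sub>m n"
proof -
  have "adj_mat (1\<^sub>m n :: 'a mat) = 1\<^sub>m n * adj_mat (1\<^sub>m n)"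
    by (rule sym, rule left_mult_one_mat, rule adj_mat(1), rule one_carrier_mat)
  also have "\<dots> = (1 :: 'a) \<cdot>\<^sub>m 1\<^sub>m n"
    using adj_mat(2)[OF one_carrier_mat] by simp
  also have "\<dots> = 1\<^sub>m n"
    by (rule eq_matI) auto
  finally show ?thesis .
qed

lemma mult_mat_vec_nth:
  "i < dim_row A \<Longrightarrow> dim_col A = c \<Longrightarrow> (A *\<^sub>v vec c f) $ i = (\<Sum>j<c. A $$ (i,j) * f j)"
  by (auto simp: scalar_prod_def atLeast0LessThan intro!: sum.cong)

text \<open>By Cramer's rule, written with the adjugate, the section equations give
  y_{j+1} = (alpha_j + y_0 beta_j) / D, where D = section_det, alpha = section_offset and
  beta = section_slope.\<close>

definition section_coeff :: "nat \<Rightarrow> (nat \<Rightarrow> complex) \<Rightarrow> nat \<Rightarrow> nat \<Rightarrow> complex" where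
  "section_coeff m a l j = (\<Sum>k<m. a (l*(m*m+1) + (k*m + j)) * root_u m k)"

definition section_const :: "nat \<Rightarrow> (nat \<Rightarrow> complex) \<Rightarrow> nat \<Rightarrow> complex" where
  "section_const m a l = a (l*(m*m+1) + m*m)"

definition section_mat :: "nat \<Rightarrow> (nat \<Rightarrow> complex) \<Rightarrow> complex mat" where
  "section_mat m a = mat (m-1) (m-1) (\<lambda>(l,j). section_coeff m a l (Suc j))"

definition section_det :: "nat \<Rightarrow> (nat \<Rightarrow> complex) \<Rightarrow> complex" where
  "section_det m a = det (section_mat m a)"

definition section_offset :: "nat \<Rightarrow> (nat \<Rightarrow> complex) \<Rightarrow> complex vec" where
  "section_offset m a = - (adj_mat (section_mat m a) *\<^sub>v vec (m-1) (section_const m a))"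

definition section_slope :: "nat \<Rightarrow> (nat \<Rightarrow> complex) \<Rightarrow> complex vec" where
  "section_slope m a = - (adj_mat (section_mat m a) *\<^sub>v vec (m-1) (\<lambda>l. section_coeff m a l 0))"

definition section_coord :: "nat \<Rightarrow> (nat \<Rightarrow> complex) \<Rightarrow> complex \<Rightarrow> nat \<Rightarrow> complex" where
  "section_coord m a s j = (if j = 0 then s
     else (section_offset m a $ (j-1) + s * section_slope m a $ (j-1)) / section_det m a)"

definition section_poly :: "nat \<Rightarrow> (nat \<Rightarrow> complex) \<Rightarrow> complex poly" where
  "section_poly m a = [:0,1:] * (\<Prod>j<m-1. [:section_offset m a $ j, section_slope m a $ j:])
     - [:section_det m a ^ (m-1):]"

lemma section_mat_carrier: "section_mat m a \<in> carrier_mat (m-1) (m-1)"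
  by (simp add: section_mat_def)

lemma dim_adj_section_mat [simp]:
  "dim_row (adj_mat (section_mat m a)) = m - 1" "dim_col (adj_mat (section_mat m a)) = m - 1"
  using adj_mat(1)[OF section_mat_carrier] by auto

lemma section_offset_nth:
  "j < m - 1 \<Longrightarrow>
    section_offset m a $ j = - (\<Sum>i<m-1. adj_mat (section_mat m a) $$ (j,i) * section_const m a i)"
  by (simp add: section_offset_def mult_mat_vec_nth del: index_mult_mat_vec)

lemma section_slope_nth:
  "j < m - 1 \<Longrightarrow>
    section_slope m a $ j = - (\<Sum>i<m-1. adj_mat (section_mat m a) $$ (j,i) * section_coeff m a i 0)"
  by (simp add: section_slope_def mult_mat_vec_nth del: index_mult_mat_vec)

lemma hyperplane_section_param_locus:
  "hyperplane_section (m*m) d (param_locus m) a = cyclic_extension m `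
     {y. (\<Prod>j<m. y j) = 1 \<and> (\<forall>l<d. section_const m a l + (\<Sum>j<m. section_coeff m a l j * y j) = 0)}"
proof -
  have hyperplane: "a (l*(m*m+1) + m*m) + (\<Sum>i<m*m. a (l*(m*m+1) + i) * cyclic_extension m y i)
      = section_const m a l + (\<Sum>j<m. section_coeff m a l j * y j)" for l y
  proof -
    have "(\<Sum>i<m*m. a (l*(m*m+1) + i) * cyclic_extension m y i)
        = (\<Sum>k<m. \<Sum>j<m. a (l*(m*m+1) + (k*m + j)) * root_u m k * y j)"
      by (simp add: sum_lessThan_mult_blocks cyclic_extension_block mult.assoc)
    also have "\<dots> = (\<Sum>j<m. section_coeff m a l j * y j)"
      by (subst sum.swap) (simp add: section_coeff_def sum_distrib_right)
    finally show ?thesis by (simp add: section_const_def)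
  qed
  show ?thesis
    unfolding hyperplane_section_def param_locus_eq using hyperplane by auto
qed

lemma section_linear_system_iff:
  assumes m: "0 < m" and D: "section_det m a \<noteq> 0"
  shows "(\<forall>l<m-1. section_const m a l + (\<Sum>j<m. section_coeff m a l j * y j) = 0) \<longleftrightarrow>
    (\<forall>j<m-1. y (Suc j) = section_coord m a (y 0) (Suc j))"
proof -
  let ?M = "section_mat m a" and ?A = "adj_mat (section_mat m a)"
  let ?w = "vec (m-1) (\<lambda>j. y (Suc j))"
  let ?v = "vec (m-1) (\<lambda>l. - (section_const m a l + section_coeff m a l 0 * y 0))"
  have "(\<Sum>j<m. section_coeff m a l j * y j)
      = section_coeff m a l 0 * y 0 + (\<Sum>j<m-1. section_coeff m a l (Suc j) * y (Suc j))" for l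
    using m sum.lessThan_Suc_shift[of "\<lambda>j. section_coeff m a l j * y j" "m-1"] by simp
  then have "(\<forall>l<m-1. section_const m a l + (\<Sum>j<m. section_coeff m a l j * y j) = 0) \<longleftrightarrow>
      ?M *\<^sub>v ?w = ?v"
    using section_mat_carrier[of m a]
    by (auto simp: vec_eq_iff mult_mat_vec_nth section_mat_def eq_neg_iff_add_eq_0 algebra_simps
        simp del: index_mult_mat_vec)
  also have "\<dots> \<longleftrightarrow> section_det m a \<cdot>\<^sub>v ?w = ?A *\<^sub>v ?v"
    using D section_mat_carrier[of m a] unfolding section_det_def
    by (intro mult_mat_vec_eq_iff_adj_mat) auto
  also have "\<dots> \<longleftrightarrow> (\<forall>j<m-1. section_det m a * y (Suc j)
      = section_offset m a $ j + y 0 * section_slope m a $ j)"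
  proof -
    have "(?A *\<^sub>v ?v) $ j = section_offset m a $ j + y 0 * section_slope m a $ j"
      if "j < m - 1" for j
      using that
      by (simp add: mult_mat_vec_nth section_offset_nth section_slope_nth sum_distrib_left
          sum_negf algebra_simps flip: sum.distrib del: index_mult_mat_vec)
    then show ?thesis
      by (auto simp: vec_eq_iff)
  qed
  also have "\<dots> \<longleftrightarrow> (\<forall>j<m-1. y (Suc j) = section_coord m a (y 0) (Suc j))"
    using D by (simp add: section_coord_def field_simps)
  finally show ?thesis .
qed

lemma poly_section_poly:
  "poly (section_poly m a) s
     = s * (\<Prod>j<m-1. section_offset m a $ j + s * section_slope m a $ j) - section_det m a ^ (m-1)"
  by (simp add: section_poly_def poly_prod)

lemma prod_section_coord_eq_1_iff:
  assumes "0 < m" and D: "section_det m a \<noteq> 0"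
  shows "(\<Prod>j<m. section_coord m a s j) = 1 \<longleftrightarrow> poly (section_poly m a) s = 0"
proof -
  have "(\<Prod>j<m. section_coord m a s j)
      = s * (\<Prod>j<m-1. section_offset m a $ j + s * section_slope m a $ j) / section_det m a ^ (m-1)"
    using assms(1) prod.lessThan_Suc_shift[of "section_coord m a s" "m-1"]
    by (simp add: section_coord_def prod_dividef)
  then show ?thesis
    using D by (simp add: poly_section_poly divide_eq_1_iff)
qed

lemma hyperplane_section_eq_roots:
  assumes m: "0 < m" and D: "section_det m a \<noteq> 0"
  shows "hyperplane_section (m*m) (m-1) (param_locus m) a
    = (\<lambda>s. cyclic_extension m (section_coord m a s)) ` {s. poly (section_poly m a) s = 0}"
  unfolding hyperplane_section_param_locus
proof (intro equalityI subsetI)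
  fix x
  assume "x \<in> cyclic_extension m ` {y. (\<Prod>j<m. y j) = 1 \<and>
    (\<forall>l<m-1. section_const m a l + (\<Sum>j<m. section_coeff m a l j * y j) = 0)}"
  then obtain y where x: "x = cyclic_extension m y" and prod: "(\<Prod>j<m. y j) = 1"
    and linear: "\<forall>l<m-1. section_const m a l + (\<Sum>j<m. section_coeff m a l j * y j) = 0"
    by blast
  have coord: "y j = section_coord m a (y 0) j" if "j < m" for j
    using linear that unfolding section_linear_system_iff[OF m D]
    by (cases j) (auto simp: section_coord_def)
  have "(\<Prod>j<m. section_coord m a (y 0) j) = (\<Prod>j<m. y j)"
    by (intro prod.cong refl) (metis coord lessThan_iff)
  then have "poly (section_poly m a) (y 0) = 0"
    using prod prod_section_coord_eq_1_iff[OF m D] by simp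
  moreover have "x = cyclic_extension m (section_coord m a (y 0))"
    unfolding x using coord by (rule cyclic_extension_cong)
  ultimately show "x \<in> (\<lambda>s. cyclic_extension m (section_coord m a s)) ` {s. poly (section_poly m a) s = 0}"
    by blast
next
  fix x
  assume "x \<in> (\<lambda>s. cyclic_extension m (section_coord m a s)) ` {s. poly (section_poly m a) s = 0}"
  then obtain s where x: "x = cyclic_extension m (section_coord m a s)"
    and root: "poly (section_poly m a) s = 0" by blast
  have "\<forall>l<m-1. section_const m a l + (\<Sum>j<m. section_coeff m a l j * section_coord m a s j) = 0"
    unfolding section_linear_system_iff[OF m D] by (simp add: section_coord_def)
  then show "x \<in> cyclic_extension m ` {y. (\<Prod>j<m. y j) = 1 \<and>
    (\<forall>l<m-1. section_const m a l + (\<Sum>j<m. section_coeff m a l j * y j) = 0)}"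
    using root prod_section_coord_eq_1_iff[OF m D] x by blast
qed

lemma inj_on_section_point:
  "0 < m \<Longrightarrow> inj_on (\<lambda>s. cyclic_extension m (section_coord m a s)) S"
  by (rule inj_on_inverseI[where g = "\<lambda>x. x 0"]) (simp add: cyclic_extension_nth section_coord_def)

lemma det_sylvester_mat_sub_pderiv:
  fixes G :: "'a::field_char_0 poly"
  assumes "degree G = n"
  shows "det (sylvester_mat_sub n (n-1) G (pderiv G)) = resultant G (pderiv G)"
  using assms by (simp add: resultant_def sylvester_mat_def degree_pderiv)

lemma resultant_pderiv_eq_0_iff:
  fixes G :: "complex poly"
  assumes "G \<noteq> 0"
  shows "resultant G (pderiv G) = 0 \<longleftrightarrow> \<not> rsquarefree G"
proof
  assume "resultant G (pderiv G) = 0"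
  then have "\<not> constant (poly (gcd G (pderiv G)))"
    using resultant_0_gcd constant_degree by blast
  then obtain z where "poly (gcd G (pderiv G)) z = 0"
    using fundamental_theorem_of_algebra by blast
  then have "poly G z = 0 \<and> poly (pderiv G) z = 0"
    by (meson dvd_trans gcd_dvd1 gcd_dvd2 poly_eq_0_iff_dvd)
  then show "\<not> rsquarefree G"
    unfolding rsquarefree_roots by blast
next
  assume "\<not> rsquarefree G"
  then obtain z where "poly G z = 0" "poly (pderiv G) z = 0"
    unfolding rsquarefree_roots by blast
  then have "[:-z,1:] dvd gcd G (pderiv G)"
    by (simp add: poly_eq_0_iff_dvd)
  then have "degree [:-z,1:] \<le> degree (gcd G (pderiv G))"
    using assms by (intro dvd_imp_degree_le) auto
  then show "resultant G (pderiv G) = 0"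
    using resultant_0_gcd by fastforce
qed

lemma card_roots_rsquarefree:
  fixes G :: "complex poly"
  assumes "rsquarefree G"
  shows "card {s. poly G s = 0} = degree G"
proof -
  let ?R = "{s. poly G s = 0}"
  have "G \<noteq> 0" using assms by (simp add: rsquarefree_def)
  have "degree G = degree (smult (lead_coeff G) (\<Prod>z\<in>?R. [:-z, 1:]))"
    using complex_poly_decompose_rsquarefree[OF assms] by simp
  also have "\<dots> = degree (\<Prod>z\<in>?R. [:-z, 1:])"
    using \<open>G \<noteq> 0\<close> by simp
  also have "\<dots> = card ?R"
    by (subst degree_prod_eq_sum_degree) auto
  finally show ?thesis ..
qed

text \<open>The discriminant is taken as a Sylvester determinant of fixed size m + (m - 1), so that it
  is polynomial in the coefficients even where the degree of section_poly drops.\<close>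

definition genericity_poly :: "nat \<Rightarrow> (nat \<Rightarrow> complex) \<Rightarrow> complex" where
  "genericity_poly m a = section_det m a * (\<Prod>j<m-1. section_slope m a $ j)
     * det (sylvester_mat_sub m (m-1) (section_poly m a) (pderiv (section_poly m a)))"

lemma poly_fun_section_coeff:
  "l < m - 1 \<Longrightarrow> j < m \<Longrightarrow> poly_fun ((m-1)*(m*m+1)) (\<lambda>a. section_coeff m a l j)"
  unfolding section_coeff_def
  by (intro poly_fun_sum pf_mult pf_const pf_var block_index_less)
    (auto intro: block_index_less[of _ m _ m, THEN less_SucI])

lemma poly_fun_section_const:
  "l < m - 1 \<Longrightarrow> poly_fun ((m-1)*(m*m+1)) (\<lambda>a. section_const m a l)"
  unfolding section_const_def by (intro pf_var block_index_less) auto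

lemma poly_fun_section_mat:
  "i < m - 1 \<Longrightarrow> j < m - 1 \<Longrightarrow> poly_fun ((m-1)*(m*m+1)) (\<lambda>a. section_mat m a $$ (i,j))"
  using poly_fun_section_coeff[of i m "Suc j"] by (simp add: section_mat_def)

lemma poly_fun_section_det: "poly_fun ((m-1)*(m*m+1)) (section_det m)"
  using poly_fun_det[OF section_mat_carrier poly_fun_section_mat]
  by (simp add: section_det_def[abs_def])

lemma poly_fun_adj_section_mat:
  "i < m - 1 \<Longrightarrow> j < m - 1 \<Longrightarrow>
    poly_fun ((m-1)*(m*m+1)) (\<lambda>a. adj_mat (section_mat m a) $$ (i,j))"
  by (rule poly_fun_adj_mat[OF section_mat_carrier poly_fun_section_mat])

lemma poly_fun_section_offset:
  "j < m - 1 \<Longrightarrow> poly_fun ((m-1)*(m*m+1)) (\<lambda>a. section_offset m a $ j)"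
  unfolding section_offset_nth
  by (intro poly_fun_uminus poly_fun_sum pf_mult poly_fun_adj_section_mat poly_fun_section_const) auto

lemma poly_fun_section_slope:
  "j < m - 1 \<Longrightarrow> poly_fun ((m-1)*(m*m+1)) (\<lambda>a. section_slope m a $ j)"
  unfolding section_slope_nth
  by (intro poly_fun_uminus poly_fun_sum pf_mult poly_fun_adj_section_mat poly_fun_section_coeff) auto

lemma poly_fun_coeffs_section_poly: "poly_fun_coeffs ((m-1)*(m*m+1)) (section_poly m)"
  unfolding section_poly_def[abs_def]
  by (intro poly_fun_coeffs_diff poly_fun_coeffs_mult poly_fun_coeffs_prod poly_fun_coeffs_linear
      poly_fun_coeffs_const pf_const poly_fun_section_offset poly_fun_section_slope poly_fun_power
      poly_fun_section_det) auto

lemma poly_fun_genericity_poly: "poly_fun ((m-1)*(m*m+1)) (genericity_poly m)"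
  unfolding genericity_poly_def[abs_def]
  by (intro pf_mult poly_fun_section_det poly_fun_prod poly_fun_section_slope
      poly_fun_det_sylvester_mat_sub poly_fun_coeffs_section_poly poly_fun_coeffs_pderiv) auto

lemma degree_section_poly:
  assumes "0 < m" and slopes: "(\<Prod>j<m-1. section_slope m a $ j) \<noteq> 0"
  shows "degree (section_poly m a) = m"
proof -
  let ?Q = "\<Prod>j<m-1. [:section_offset m a $ j, section_slope m a $ j:]"
  have "degree ?Q = (\<Sum>j<m-1. degree [:section_offset m a $ j, section_slope m a $ j:])"
    using slopes by (intro degree_prod_eq_sum_degree) auto
  also have "\<dots> = m - 1"
    using slopes by simp
  finally have "degree ?Q = m - 1" .
  moreover have "?Q \<noteq> 0"
    using slopes by (auto simp: prod_zero_iff)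
  moreover have "section_poly m a = pCons (- (section_det m a ^ (m-1))) ?Q"
    by (simp add: section_poly_def)
  ultimately show ?thesis
    using assms(1) by simp
qed

lemma card_hyperplane_section_generic:
  assumes m: "0 < m" and P: "genericity_poly m a \<noteq> 0"
  shows "finite (hyperplane_section (m*m) (m-1) (param_locus m) a)
    \<and> card (hyperplane_section (m*m) (m-1) (param_locus m) a) = m"
proof -
  let ?G = "section_poly m a"
  have D: "section_det m a \<noteq> 0" and slopes: "(\<Prod>j<m-1. section_slope m a $ j) \<noteq> 0"
    and disc: "det (sylvester_mat_sub m (m-1) ?G (pderiv ?G)) \<noteq> 0"
    using P by (auto simp: genericity_poly_def)
  have degree: "degree ?G = m"
    using degree_section_poly[OF m slopes] .
  then have "?G \<noteq> 0"
    using m by auto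
  then have "rsquarefree ?G"
    using disc resultant_pderiv_eq_0_iff det_sylvester_mat_sub_pderiv[OF degree] by simp
  then have "finite {s. poly ?G s = 0}" "card {s. poly ?G s = 0} = m"
    using card_roots_rsquarefree degree \<open>?G \<noteq> 0\<close> by (simp_all add: poly_roots_finite)
  then show ?thesis
    unfolding hyperplane_section_eq_roots[OF m D]
    by (simp add: card_image inj_on_section_point[OF m])
qed

section \<open>A nondegenerate section\<close>

text \<open>The coefficients of the hyperplanes x_{l+1} - x_0 = 0, for l < m - 1.\<close>

definition diagonal_coeffs :: "nat \<Rightarrow> nat \<Rightarrow> complex" where
  "diagonal_coeffs m p = (if p < (m-1)*(m*m+1)
     then (let l = p div (m*m+1); i = p mod (m*m+1) in
       if i = 0 then -1 else if i = Suc l then 1 else 0)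
     else 0)"

lemma diagonal_coeffs_cpoints: "diagonal_coeffs m \<in> cpoints ((m-1)*(m*m+1))"
  by (simp add: cpoints_def diagonal_coeffs_def)

lemma diagonal_coeffs_block:
  assumes "l < m - 1" "i < m*m+1"
  shows "diagonal_coeffs m (l*(m*m+1) + i) = (if i = 0 then -1 else if i = Suc l then 1 else 0)"
proof -
  have "(l*n + i) div n = l" "(l*n + i) mod n = i" if "i < n" for n :: nat
    using that by auto
  then have "(l*(m*m+1) + i) div (m*m+1) = l" "(l*(m*m+1) + i) mod (m*m+1) = i"
    using assms(2) by blast+
  then show ?thesis
    using block_index_less[OF assms] by (simp only: diagonal_coeffs_def Let_def if_True)
qed

lemma section_coeff_diagonal_coeffs:
  assumes l: "l < m - 1" and j: "j < m"
  shows "section_coeff m (diagonal_coeffs m) l j = (if j = 0 then -1 else if j = Suc l then 1 else 0)"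
    (is "_ = ?c")
proof -
  have "diagonal_coeffs m (l*(m*m+1) + (k*m + j)) * root_u m k = (if k = 0 then ?c else 0)"
    if k: "k < m" for k
  proof -
    have bound: "k*m + j < m*m + 1"
      using block_index_less[OF k j] by simp
    show ?thesis
    proof (cases "k = 0")
      case False
      then have "m \<le> k*m"
        by simp
      moreover have "Suc l < m"
        using l by linarith
      ultimately have "Suc l < k*m + j"
        by linarith
      then show ?thesis
        using False by (subst diagonal_coeffs_block[OF l bound]) auto
    qed (subst diagonal_coeffs_block[OF l bound], simp)
  qed
  then have "section_coeff m (diagonal_coeffs m) l j = (\<Sum>k<m. if k = 0 then ?c else 0)"
    unfolding section_coeff_def by (intro sum.cong) auto
  also have "\<dots> = ?c"
    using j by simp
  finally show ?thesis .
qed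

lemma section_mat_diagonal_coeffs: "section_mat m (diagonal_coeffs m) = 1\<^sub>m (m-1)"
  by (rule eq_matI) (auto simp: section_mat_def section_coeff_diagonal_coeffs)

lemma section_det_diagonal_coeffs: "section_det m (diagonal_coeffs m) = 1"
  by (simp add: section_det_def section_mat_diagonal_coeffs)

lemma adj_section_mat_diagonal_coeffs:
  "adj_mat (section_mat m (diagonal_coeffs m)) = 1\<^sub>m (m-1)"
  by (simp add: section_mat_diagonal_coeffs adj_mat_one_mat)

lemma section_const_diagonal_coeffs:
  assumes l: "l < m - 1"
  shows "section_const m (diagonal_coeffs m) l = 0"
proof -
  have "Suc l < m"
    using l by simp
  moreover have "m \<le> m*m"
    by simp
  ultimately have "0 < m" "Suc l < m*m"
    by linarith+
  then show ?thesis
    unfolding section_const_def by (subst diagonal_coeffs_block[OF l]) auto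
qed

lemma section_offset_diagonal_coeffs:
  "j < m - 1 \<Longrightarrow> section_offset m (diagonal_coeffs m) $ j = 0"
  by (simp add: section_offset_nth section_const_diagonal_coeffs sum.neutral)

lemma section_slope_diagonal_coeffs:
  assumes j: "j < m - 1"
  shows "section_slope m (diagonal_coeffs m) $ j = 1"
proof -
  have "(\<Sum>i<m-1. adj_mat (section_mat m (diagonal_coeffs m)) $$ (j,i) * section_coeff m (diagonal_coeffs m) i 0)
      = (\<Sum>i<m-1. if j = i then -1 else 0)"
    using j by (intro sum.cong) (auto simp: adj_section_mat_diagonal_coeffs section_coeff_diagonal_coeffs)
  then show ?thesis
    using j by (simp add: section_slope_nth)
qed

lemma section_poly_diagonal_coeffs:
  assumes "0 < m"
  shows "section_poly m (diagonal_coeffs m) = [:0,1:] ^ m - 1"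
proof -
  have "(\<Prod>j<m-1. [:section_offset m (diagonal_coeffs m) $ j, section_slope m (diagonal_coeffs m) $ j:])
      = (\<Prod>j<m-1. [:0,1:])"
    by (intro prod.cong) (simp_all add: section_offset_diagonal_coeffs section_slope_diagonal_coeffs)
  then show ?thesis
    using assms
    by (simp add: section_poly_def section_det_diagonal_coeffs pCons_one power_Suc[symmetric])
qed

lemma genericity_poly_diagonal_coeffs:
  assumes m: "0 < m"
  shows "genericity_poly m (diagonal_coeffs m) \<noteq> 0"
proof -
  let ?G = "section_poly m (diagonal_coeffs m)"
  have slopes: "(\<Prod>j<m-1. section_slope m (diagonal_coeffs m) $ j) = 1"
    by (simp add: section_slope_diagonal_coeffs)
  have "pderiv ([:0,1:] ^ m - 1 :: complex poly) = smult (of_nat m) ([:0,1:] ^ (m-1))"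
    by (simp add: pderiv_diff pderiv_power pderiv_pCons)
  then have "rsquarefree ?G"
    using m by (auto simp: section_poly_diagonal_coeffs rsquarefree_roots poly_power power_0_left)
  moreover have "degree ?G = m"
    using slopes by (intro degree_section_poly[OF m]) simp
  ultimately have "det (sylvester_mat_sub m (m-1) ?G (pderiv ?G)) \<noteq> 0"
    using resultant_pderiv_eq_0_iff[of ?G] det_sylvester_mat_sub_pderiv[of ?G m]
    by (auto simp: rsquarefree_def)
  then show ?thesis
    unfolding genericity_poly_def section_det_diagonal_coeffs slopes by simp
qed

theorem proposition3:
  fixes m :: nat
  assumes "m \<ge> 2"
  shows "has_degree (m*m) (m-1)
           (zariski_closure (m*m)
              {param_point m t | t. \<forall>j<m-1. t j \<noteq> 0})
           m"
proof -
  have m: "0 < m"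
    using assms by simp
  have closure: "zariski_closure (m*m) {param_point m t | t. \<forall>j<m-1. t j \<noteq> 0} = param_locus m"
    unfolding image_param_point[OF assms] by (rule zariski_closure_param_locus)
  show ?thesis
    unfolding has_degree_def closure
  proof (intro exI[of _ "genericity_poly m"] conjI ballI impI)
    show "poly_fun ((m-1)*(m*m+1)) (genericity_poly m)"
      by (rule poly_fun_genericity_poly)
    show "\<exists>a\<in>cpoints ((m-1)*(m*m+1)). genericity_poly m a \<noteq> 0"
      using diagonal_coeffs_cpoints genericity_poly_diagonal_coeffs[OF m] by blast
  qed (use card_hyperplane_section_generic[OF m] in blast)+
qed

end
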